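(* Let $d\ge1$ and $q\ge2$ even. There exist a unique constant $C\ne0$ and a unique polynomial $p_{q+1}$ whose monomials have degrees in $\{1,3,\ldots,q+1\}$ such that $\bar p_{q+1,1}(x)=p_{q+1}(x)\mathbbm{1}_{x\le1}$ satisfies $\bar p_{q+1,1}\in\mathcal M_{d,1,q+1}$, $\int_0^\infty x^{d+q}\bar p_{q+1,1}(x)\,dx=C$, and $p_{q+1}(1)=0$. Moreover, this $\bar p_{q+1,1}$ equals $G^{B(1)}_{d,q}$, the derivative of $G^B_{d,q}$.
   Context: $B_{d,i}(g)=\int_0^\infty x^{d-1+i}g(x)dx$, $b_d=2\pi^{d/2}/\Gamma(d/2)$. $\mathcal M_{d,1,q+1}$: functions $g$ on $[0,\infty)$ with $B_{d,1}(g)=-d\,b_d^{-1}$, $B_{d,i}(g)=0$ for $i=3,5,\ldots,q-1$, and $B_{d,q+1}(g)\ne0$. $G^B_{d,q}(x)=\frac{\Gamma(\frac{d+q}{2})}{\pi^{d/2}\Gamma(\frac q2)}P^{(\frac d2,-2)}_{\frac q2+1}(1-2x^2)\mathbbm{1}_{x\le1}$, where $P^{(\alpha,\beta)}_n(x)=\frac{(-1)^n}{2^nn!}(1-x)^{-\alpha}(1+x)^{-\beta}\frac{d^n}{dx^n}[(1-x)^{n+\alpha}(1+x)^{n+\beta}]$ is the Jacobi polynomial. *)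

theory Defs
  imports "HOL-Analysis.Analysis" "HOL-Computational_Algebra.Polynomial"
begin

definition Bmom :: "nat \<Rightarrow> nat \<Rightarrow> (real \<Rightarrow> real) \<Rightarrow> real" where
  "Bmom d i g = integral {0..} (\<lambda>x. x ^ (d - 1 + i) * g x)"

text \<open>b_d = 2 pi^(d/2) / Gamma(d/2), the surface area of the unit sphere.\<close>
definition bsph :: "nat \<Rightarrow> real" where
  "bsph d = 2 * pi powr (real d / 2) / Gamma (real d / 2)"

text \<open>The class M_{d,1,q+1}.  The moments involved are required to exist
  (integrability), which the paper leaves implicit.\<close>
definition M_class :: "nat \<Rightarrow> nat \<Rightarrow> (real \<Rightarrow> real) \<Rightarrow> bool" where
  "M_class d q g \<longleftrightarrow>
     (\<forall>i\<in>{1..q+1}. odd i \<longrightarrow> (\<lambda>x. x ^ (d - 1 + i) * g x) integrable_on {0..}) \<and>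
     Bmom d 1 g = - real d / bsph d \<and>
     (\<forall>i\<in>{3..q-1}. odd i \<longrightarrow> Bmom d i g = 0) \<and>
     Bmom d (q + 1) g \<noteq> 0"

text \<open>Jacobi polynomial via the Rodrigues formula (beta an integer, alpha real).
  The factors in (1+y) are integer powers; those in (1-y) real powers, so the
  formula is literal for -1 <= y < 1.\<close>
definition jacobiP :: "nat \<Rightarrow> real \<Rightarrow> int \<Rightarrow> real \<Rightarrow> real" where
  "jacobiP n \<alpha> \<beta> y =
     (-1) ^ n / (2 ^ n * fact n) * (1 - y) powr (- \<alpha>) * (1 + y) powi (- \<beta>) *
     (deriv ^^ n) (\<lambda>t. (1 - t) powr (real n + \<alpha>) * (1 + t) powi (int n + \<beta>)) y"

definition GB :: "nat \<Rightarrow> nat \<Rightarrow> real \<Rightarrow> real" where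
  "GB d q x = (if x \<le> 1 then
      Gamma ((real d + real q) / 2) / (pi powr (real d / 2) * Gamma (real q / 2)) *
      jacobiP (q div 2 + 1) (real d / 2) (-2) (1 - 2 * x\<^sup>2) else 0)"

definition pbar :: "real poly \<Rightarrow> real \<Rightarrow> real" where
  "pbar p x = (if x \<le> 1 then poly p x else 0)"

end

theory Submission
  imports Defs
begin

(* Write q = 2m.  An odd polynomial of degree at most 2m + 1 has m + 1 coefficients a_j, and the
   conditions p(1) = 0, B_{d,1} = -d/b_d, B_{d,3} = ... = B_{d,q-1} = 0 are m + 1 linear equations
   for them.  The (d + 2k)-th moment of x^(2j+1) on [0,1] is 1/(d + 2k + 2j + 2), so the homogeneous
   system is a Cauchy system bordered by a row of ones: the rational function sum_j a_j/(s + 2j)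
   with sum_j a_j = 0 has at most m - 1 zeros.  This gives uniqueness, and also B_{d,q+1} <> 0 for
   every solution.
   For existence, Rodrigues' formula shows that on (0,1] the function G^B_{d,q} is the even
   polynomial H(x) = K (1 - x^2)^2 sum_{i<m} c_i x^(2i), with c_i = (-1)^i C(m-1,i) (d/2+i+1)_(m+1).
   Its derivative is odd and vanishes at 1, and integration by parts turns its moments into
   alternating binomial sums sum_i (-1)^i C(m-1,i) R(i).  For B_{d,3}, ..., B_{d,q-1} the summand R
   is a polynomial of degree < m - 1, so the sum vanishes; for B_{d,1} it has a simple pole, whose
   residue produces -d/b_d. *)

section \<open>Odd polynomials and their moments on the unit interval\<close>

definition odd_poly_deg_le :: "nat \<Rightarrow> real poly \<Rightarrow> bool" where
  "odd_poly_deg_le n p \<longleftrightarrow> (\<forall>k. coeff p k \<noteq> 0 \<longrightarrow> odd k \<and> k \<le> n)"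

definition poly_moment :: "nat \<Rightarrow> real poly \<Rightarrow> real" where
  "poly_moment r p = integral {0..1} (\<lambda>x. x ^ r * poly p x)"

lemma has_integral_power_unit_interval:
  "((\<lambda>x::real. x ^ n) has_integral 1 / (real n + 1)) {0..1}"
proof -
  have "((\<lambda>x::real. x ^ Suc n / real (Suc n)) has_real_derivative x ^ n) (at x)" for x
    using DERIV_cdivide[OF DERIV_pow[of "Suc n" x], of "real (Suc n)"] by simp
  then have "((\<lambda>x::real. x ^ n) has_integral (1 ^ Suc n / real (Suc n) - 0 ^ Suc n / real (Suc n))) {0..1}"
    by (intro fundamental_theorem_of_calculus)
       (auto simp: has_real_derivative_iff_has_vector_derivative[symmetric] intro: DERIV_subset)
  then show ?thesis by (simp add: add.commute)
qed

lemma has_integral_poly_moment: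
  "((\<lambda>x. x ^ r * poly p x) has_integral poly_moment r p) {0..1}"
  unfolding poly_moment_def
  by (intro integrable_integral integrable_continuous_interval continuous_intros)

lemma has_integral_pbar_moment:
  "((\<lambda>x. x ^ r * pbar p x) has_integral poly_moment r p) {0..}"
proof -
  have "(\<lambda>x::real. if x \<in> {0..} then x ^ r * pbar p x else 0)
      = (\<lambda>x. if x \<in> {0..1} then x ^ r * poly p x else 0)"
    by (auto simp: pbar_def)
  then have "((\<lambda>x. if x \<in> {0..} then x ^ r * pbar p x else 0) has_integral poly_moment r p) UNIV"
    using has_integral_poly_moment[of r p] by (simp only: has_integral_restrict_UNIV)
  then show ?thesis by (simp only: has_integral_restrict_UNIV)
qed

lemma poly_moment_diff: "poly_moment r (p - q) = poly_moment r p - poly_moment r q"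
proof -
  have "(\<lambda>x. x ^ r * poly (p - q) x) = (\<lambda>x. x ^ r * poly p x - x ^ r * poly q x)"
    by (simp add: algebra_simps)
  then show ?thesis
    using has_integral_diff[OF has_integral_poly_moment has_integral_poly_moment, of r p r q]
    by (simp add: poly_moment_def integral_unique)
qed

lemma Bmom_pbar: "Bmom d i (pbar p) = poly_moment (d - 1 + i) p"
  unfolding Bmom_def by (rule integral_unique[OF has_integral_pbar_moment])

lemma poly_odd_poly_deg_le:
  assumes "odd_poly_deg_le (2 * m + 1) p"
  shows "poly p x = (\<Sum>j\<le>m. coeff p (2 * j + 1) * x ^ (2 * j + 1))"
proof -
  have atMost_upto: "{..<2 * Suc m} = {..2 * m + 1}"
    by auto
  have "degree p \<le> 2 * m + 1"
    using assms unfolding odd_poly_deg_le_def by (intro degree_le) force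
  then have "p = (\<Sum>k<2 * Suc m. monom (coeff p k) k)"
    unfolding atMost_upto by (rule poly_as_sum_of_monoms'[symmetric])
  then have "poly p x = poly (\<Sum>k<2 * Suc m. monom (coeff p k) k) x"
    by simp
  also have "\<dots> = (\<Sum>k<2 * Suc m. if even k then 0 else coeff p k * x ^ k)"
    using assms unfolding poly_sum poly_monom odd_poly_deg_le_def by (intro sum.cong refl) auto
  also have "\<dots> = (\<Sum>j\<le>m. coeff p (2 * j + 1) * x ^ (2 * j + 1))"
    by (subst sum_split_even_odd) (simp add: lessThan_Suc_atMost)
  finally show ?thesis .
qed

lemma odd_poly_deg_le_diff:
  assumes "odd_poly_deg_le n p" and "odd_poly_deg_le n q"
  shows "odd_poly_deg_le n (p - q)"
  unfolding odd_poly_deg_le_def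
proof (intro allI impI)
  fix k assume "coeff (p - q) k \<noteq> 0"
  then have "coeff p k \<noteq> 0 \<or> coeff q k \<noteq> 0"
    by auto
  then show "odd k \<and> k \<le> n"
    using assms by (auto simp: odd_poly_deg_le_def)
qed

lemma poly_moment_odd_poly:
  assumes "odd_poly_deg_le (2 * m + 1) p"
  shows "poly_moment r p = (\<Sum>j\<le>m. coeff p (2 * j + 1) / (real r + 2 * real j + 2))"
proof -
  have expand: "x ^ r * poly p x = (\<Sum>j\<le>m. coeff p (2 * j + 1) * x ^ (r + 2 * j + 1))" for x :: real
    by (simp add: poly_odd_poly_deg_le[OF assms] sum_distrib_left power_add ac_simps)
  have "((\<lambda>x. x ^ r * poly p x) has_integral
      (\<Sum>j\<le>m. coeff p (2 * j + 1) * (1 / (real (r + 2 * j + 1) + 1)))) {0..1}"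
    unfolding expand
    by (intro has_integral_sum finite_atMost has_integral_mult_right has_integral_power_unit_interval)
  then show ?thesis
    unfolding poly_moment_def by (simp add: integral_unique add_ac)
qed

lemma cauchy_sum_eq_0_imp_eq_0:
  fixes a c :: "nat \<Rightarrow> real"
  assumes inj: "inj_on c {..m}" and S: "finite S" "card S = m"
    and nz: "\<And>s j. s \<in> S \<Longrightarrow> j \<le> m \<Longrightarrow> s + c j \<noteq> 0"
    and sums: "\<And>s. s \<in> S \<Longrightarrow> (\<Sum>j\<le>m. a j / (s + c j)) = 0"
    and total: "(\<Sum>j\<le>m. a j) = 0"
    and j: "j \<le> m"
  shows "a j = 0"
proof -
  \<comment> \<open>Clearing denominators gives a polynomial of degree \<open>< m\<close> with the \<open>m\<close> roots \<open>S\<close>.\<close>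
  define Q where "Q j = (\<Prod>i\<in>{..m}-{j}. [:c i, 1:])" for j
  define N where "N = (\<Sum>j\<le>m. smult (a j) (Q j))"
  have poly_Q: "poly (Q j) s = (\<Prod>i\<in>{..m}-{j}. s + c i)" for j s
    by (simp add: Q_def poly_prod add.commute)
  have degree_Q: "degree (Q j) = m" and lead_Q: "coeff (Q j) m = 1" if "j \<le> m" for j
  proof -
    have "degree (Q j) = (\<Sum>i\<in>{..m}-{j}. degree [:c i, 1:])"
      unfolding Q_def by (rule degree_prod_eq_sum_degree) auto
    then show "degree (Q j) = m" using that by simp
    then have "coeff (Q j) m = lead_coeff (Q j)" by simp
    also have "\<dots> = 1" unfolding Q_def lead_coeff_prod by simp
    finally show "coeff (Q j) m = 1" .
  qed
  have "degree N \<le> m"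
    unfolding N_def by (intro degree_sum_le) (auto intro: order.trans[OF degree_smult_le] simp: degree_Q)
  moreover have "coeff N m = 0"
    unfolding N_def coeff_sum using total by (simp add: lead_Q)
  ultimately have "degree N < m \<or> N = 0"
    by (metis le_neq_implies_less leading_coeff_0_iff)
  have root: "poly N s = 0" if "s \<in> S" for s
  proof -
    have "poly N s = (\<Sum>j\<le>m. a j * (\<Prod>i\<in>{..m}-{j}. s + c i))"
      by (simp add: N_def poly_sum poly_Q)
    also have "\<dots> = (\<Sum>j\<le>m. a j / (s + c j)) * (\<Prod>i\<le>m. s + c i)"
      unfolding sum_distrib_right
    proof (rule sum.cong[OF refl])
      fix j assume "j \<in> {..m}"
      then show "a j * (\<Prod>i\<in>{..m}-{j}. s + c i) = a j / (s + c j) * (\<Prod>i\<le>m. s + c i)"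
        using nz[OF that, of j] by (simp add: prod.remove)
    qed
    finally show ?thesis using sums[OF that] by simp
  qed
  have "N = 0"
  proof (rule ccontr)
    assume "N \<noteq> 0"
    have "card S \<le> card {x. poly N x = 0}"
      using root by (intro card_mono poly_roots_finite \<open>N \<noteq> 0\<close>) auto
    also have "\<dots> \<le> degree N"
      by (rule card_poly_roots_bound) fact
    finally show False
      using \<open>degree N < m \<or> N = 0\<close> \<open>N \<noteq> 0\<close> S by simp
  qed
  have "poly (Q j') (- c j) = 0" if "j' \<le> m" "j' \<noteq> j" for j'
    unfolding poly_Q using j that by (intro prod_zero) auto
  then have "poly N (- c j) = a j * poly (Q j) (- c j)"
    using j by (simp add: N_def poly_sum sum.remove[of _ j])
  moreover have "poly (Q j) (- c j) \<noteq> 0"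
    unfolding poly_Q using inj j by (auto simp: inj_on_def)
  ultimately show "a j = 0"
    using \<open>N = 0\<close> by simp
qed

lemma odd_poly_eq_0_if_moments_vanish:
  assumes p: "odd_poly_deg_le (2 * m + 1) p" "poly p 1 = 0"
    and R: "finite R" "card R = m" "\<And>r. r \<in> R \<Longrightarrow> poly_moment r p = 0"
  shows "p = 0"
proof (rule poly_eqI)
  have odd_coeff: "coeff p (2 * j + 1) = 0" if "j \<le> m" for j
  proof (rule cauchy_sum_eq_0_imp_eq_0[where a = "\<lambda>j. coeff p (2 * j + 1)"
        and c = "\<lambda>j. 2 * real j" and S = "(\<lambda>r. real r + 2) ` R"])
    show "inj_on (\<lambda>j. 2 * real j) {..m}" "finite ((\<lambda>r. real r + 2) ` R)"
      using R by (auto simp: inj_on_def)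
    show "card ((\<lambda>r. real r + 2) ` R) = m"
      using R by (subst card_image) (auto simp: inj_on_def)
    show "s + 2 * real j \<noteq> 0" if "s \<in> (\<lambda>r. real r + 2) ` R" for s j
      using that by auto
    show "(\<Sum>j\<le>m. coeff p (2 * j + 1) / (s + 2 * real j)) = 0"
      if s: "s \<in> (\<lambda>r. real r + 2) ` R" for s
    proof -
      obtain r where r: "r \<in> R" "s = real r + 2" using s by blast
      have "(\<Sum>j\<le>m. coeff p (2 * j + 1) / (s + 2 * real j)) = poly_moment r p"
        unfolding poly_moment_odd_poly[OF p(1)] r(2) by (intro sum.cong refl) (simp add: add_ac)
      then show ?thesis using R(3)[OF r(1)] by simp
    qed
    show "(\<Sum>j\<le>m. coeff p (2 * j + 1)) = 0"
      using p poly_odd_poly_deg_le[OF p(1), of 1] by simp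
  qed fact
  fix k
  show "coeff p k = coeff 0 k"
  proof (cases "odd k \<and> k \<le> 2 * m + 1")
    case True
    then have "k = 2 * ((k - 1) div 2) + 1" "(k - 1) div 2 \<le> m" by presburger+
    then show ?thesis using odd_coeff by (metis coeff_0)
  next
    case False
    then show ?thesis using p(1) by (auto simp: odd_poly_deg_le_def)
  qed
qed

section \<open>Alternating binomial sums\<close>

lemma alternating_binomial_sum_poly_eq_0:
  fixes p :: "real poly"
  assumes "degree p < N"
  shows "(\<Sum>i\<le>N. (-1) ^ i * real (N choose i) * poly p (real i)) = 0"
  using assms
proof (induction N arbitrary: p)
  case 0
  then show ?case by simp
next
  case (Suc M)
  obtain a r where p: "p = pCons a r" by (cases p)
  have "(\<Sum>i\<le>Suc M. (-1) ^ i * real (Suc M choose i) * poly p (real i))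
      = a * (\<Sum>i\<le>Suc M. (-1) ^ i * real (Suc M choose i))
        + (\<Sum>i\<le>Suc M. (-1) ^ i * real (Suc M choose i) * real i * poly r (real i))"
    by (simp add: p sum_distrib_left sum.distrib algebra_simps)
  also have "(\<Sum>i\<le>Suc M. (-1) ^ i * real (Suc M choose i)) = 0"
    by (rule choose_alternating_sum) simp
  also have "(\<Sum>i\<le>Suc M. (-1) ^ i * real (Suc M choose i) * real i * poly r (real i)) = 0"
  proof (cases "r = 0")
    case False
    define r' where "r' = pcompose r [:1, 1:]"
    have "degree r' < M"
      using Suc.prems False by (simp add: p r'_def degree_pcompose)
    have "(\<Sum>i\<le>Suc M. (-1) ^ i * real (Suc M choose i) * real i * poly r (real i))
        = (\<Sum>k\<le>M. (-1) ^ Suc k * real (Suc M choose Suc k) * real (Suc k) * poly r (real (Suc k)))"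
      by (subst sum.atMost_Suc_shift) simp
    also have "\<dots> = - real (Suc M) * (\<Sum>k\<le>M. (-1) ^ k * real (M choose k) * poly r' (real k))"
      unfolding sum_distrib_left
    proof (rule sum.cong[OF refl])
      fix k
      define c where "c = real (Suc M choose Suc k)"
      have c: "c * real (Suc k) = real (Suc M) * real (M choose k)"
        unfolding c_def using Suc_times_binomial[of k M] by (metis mult.commute of_nat_mult)
      have "(-1) ^ Suc k * c * real (Suc k) * poly r (real (Suc k))
          = - (c * real (Suc k)) * ((-1) ^ k * poly r (real k + 1))"
        by (simp add: algebra_simps)
      also have "\<dots> = - real (Suc M) * ((-1) ^ k * real (M choose k) * poly r' (real k))"
        unfolding c by (simp add: r'_def poly_pcompose algebra_simps)
      finally show "(-1) ^ Suc k * real (Suc M choose Suc k) * real (Suc k) * poly r (real (Suc k))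
          = - real (Suc M) * ((-1) ^ k * real (M choose k) * poly r' (real k))"
        unfolding c_def .
    qed
    also have "\<dots> = 0"
      using Suc.IH[OF \<open>degree r' < M\<close>] by simp
    finally show ?thesis .
  qed simp
  finally show ?case by simp
qed

lemma alternating_binomial_sum_Suc:
  fixes f :: "nat \<Rightarrow> real"
  shows "(\<Sum>i\<le>Suc M. (-1) ^ i * real (Suc M choose i) * f i)
       = (\<Sum>i\<le>M. (-1) ^ i * real (M choose i) * (f i - f (Suc i)))"
proof -
  have "real (Suc M choose i) = real (M choose i) + (if i = 0 then 0 else real (M choose (i - 1)))" for i
    by (cases i) auto
  then have "(\<Sum>i\<le>Suc M. (-1) ^ i * real (Suc M choose i) * f i)
      = (\<Sum>i\<le>Suc M. (-1) ^ i * real (M choose i) * f i)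
        + (\<Sum>i\<le>Suc M. (-1) ^ i * (if i = 0 then 0 else real (M choose (i - 1))) * f i)"
    by (simp add: sum.distrib algebra_simps)
  also have "(\<Sum>i\<le>Suc M. (-1) ^ i * real (M choose i) * f i) = (\<Sum>i\<le>M. (-1) ^ i * real (M choose i) * f i)"
    by simp
  also have "(\<Sum>i\<le>Suc M. (-1) ^ i * (if i = 0 then 0 else real (M choose (i - 1))) * f i)
      = (\<Sum>i\<le>M. (-1) ^ Suc i * real (M choose i) * f (Suc i))"
    by (subst sum.atMost_Suc_shift) simp
  finally show ?thesis
    by (simp add: sum.distrib[symmetric] sum_subtractf[symmetric] algebra_simps)
qed

lemma alternating_binomial_sum_reciprocal:
  fixes a :: real
  assumes "a > 0"
  shows "(\<Sum>i\<le>N. (-1) ^ i * real (N choose i) * (1 / (a + real i))) = fact N / pochhammer a (Suc N)"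
  using assms
proof (induction N arbitrary: a)
  case 0
  then show ?case by simp
next
  case (Suc M)
  have "(\<Sum>i\<le>Suc M. (-1) ^ i * real (Suc M choose i) * (1 / (a + real i)))
      = (\<Sum>i\<le>M. (-1) ^ i * real (M choose i) * (1 / (a + real i)))
        - (\<Sum>i\<le>M. (-1) ^ i * real (M choose i) * (1 / ((a + 1) + real i)))"
    unfolding alternating_binomial_sum_Suc by (simp add: sum_subtractf[symmetric] algebra_simps)
  also have "\<dots> = fact M / pochhammer a (Suc M) - fact M / pochhammer (a + 1) (Suc M)"
    using Suc by simp
  also have "\<dots> = fact (Suc M) / pochhammer a (Suc (Suc M))"
  proof -
    define X where "X = pochhammer (a + 1) M"
    have "X > 0"
      unfolding X_def using Suc.prems by (intro pochhammer_pos) simp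
    have e1: "pochhammer a (Suc M) = a * X"
      by (simp add: X_def pochhammer_rec)
    have e2: "pochhammer (a + 1) (Suc M) = (a + 1 + real M) * X"
      by (simp add: X_def pochhammer_rec')
    have e3: "pochhammer a (Suc (Suc M)) = a * ((a + 1 + real M) * X)"
      by (subst pochhammer_rec) (simp add: e2)
    have "F / (A * X) - F / (B * X) = F * (B - A) / (A * (B * X))"
      if "A \<noteq> 0" "B \<noteq> 0" for F A B :: real
      using that \<open>X > 0\<close> by (simp add: field_simps)
    from this[of a "a + 1 + real M" "fact M"] show ?thesis
      unfolding e1 e2 e3 using Suc.prems by (simp add: algebra_simps)
  qed
  finally show ?case .
qed

lemma alternating_binomial_sum_poly_div:
  fixes p :: "real poly"
  assumes "a > 0" "degree p \<le> N"
  shows "(\<Sum>i\<le>N. (-1) ^ i * real (N choose i) * (poly p (a + real i) / (a + real i)))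
       = poly p 0 * (fact N / pochhammer a (Suc N))"
proof -
  obtain c h where p: "p = pCons c h" by (cases p)
  define h' where "h' = pcompose h [:a, 1:]"
  have split: "poly p (a + real i) / (a + real i) = c * (1 / (a + real i)) + poly h' (real i)" for i
    using \<open>a > 0\<close> by (simp add: p h'_def poly_pcompose add_divide_distrib add.commute)
  have "(\<Sum>i\<le>N. (-1) ^ i * real (N choose i) * poly h' (real i)) = 0"
  proof (cases "h = 0")
    case False
    then have "degree h' < N"
      using assms(2) by (simp add: p h'_def degree_pcompose)
    then show ?thesis by (rule alternating_binomial_sum_poly_eq_0)
  qed (simp add: h'_def)
  moreover have "(\<Sum>i\<le>N. (-1) ^ i * real (N choose i) * (poly p (a + real i) / (a + real i)))
      = c * (\<Sum>i\<le>N. (-1) ^ i * real (N choose i) * (1 / (a + real i)))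
        + (\<Sum>i\<le>N. (-1) ^ i * real (N choose i) * poly h' (real i))"
    unfolding split by (simp add: sum.distrib sum_distrib_left algebra_simps)
  ultimately show ?thesis
    using alternating_binomial_sum_reciprocal[OF \<open>a > 0\<close>, of N] by (simp add: p)
qed

definition pochhammer_poly :: "real \<Rightarrow> nat \<Rightarrow> real poly" where
  "pochhammer_poly c n = (\<Prod>l<n. [:c + real l, 1:])"

lemma poly_pochhammer_poly: "poly (pochhammer_poly c n) x = pochhammer (x + c) n"
  by (simp add: pochhammer_poly_def poly_prod pochhammer_prod atLeast0LessThan ac_simps)

lemma degree_pochhammer_poly: "degree (pochhammer_poly c n) = n"
  unfolding pochhammer_poly_def by (subst degree_prod_eq_sum_degree) auto

section \<open>Jacobi polynomials with \<open>\<beta> = -2\<close>\<close>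

lemma funpow_deriv_eq_on_open:
  assumes "open S" and base: "\<And>y. y \<in> S \<Longrightarrow> f y = g 0 y"
    and step: "\<And>j y. y \<in> S \<Longrightarrow> (g j has_real_derivative g (Suc j) y) (at y)"
    and "y \<in> S"
  shows "(deriv ^^ j) f y = g j y"
  using \<open>y \<in> S\<close>
proof (induction j arbitrary: y)
  case 0
  then show ?case using base by simp
next
  case (Suc j)
  have "((deriv ^^ j) f has_real_derivative g (Suc j) y) (at y)"
    by (rule has_field_derivative_transform_within_open[OF step[OF Suc.prems] \<open>open S\<close> Suc.prems])
       (use Suc.IH in auto)
  then show ?case by (simp add: DERIV_imp_deriv)
qed

lemma has_real_derivative_pochhammer_one_minus_powr:
  assumes "t < 1"
  shows "((\<lambda>t. pochhammer (- e) j * (1 - t) powr (e - real j)) has_real_derivative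
           pochhammer (- e) (Suc j) * (1 - t) powr (e - real (Suc j))) (at t)"
proof -
  have "((\<lambda>t. 1 - t) has_real_derivative -1) (at t)"
    by (rule derivative_eq_intros refl)+ simp
  from DERIV_fun_powr[OF this, of "e - real j"] assms
  have "((\<lambda>t. (1 - t) powr (e - real j)) has_real_derivative
          (e - real j) * (1 - t) powr (e - real j - 1) * (-1)) (at t)"
    by simp
  from DERIV_cmult[OF this, of "pochhammer (- e) j"] show ?thesis
    by (simp add: pochhammer_Suc algebra_simps diff_diff_add)
qed

lemma rodrigues_term_beta_minus2_eq_sum:
  fixes n :: nat and \<alpha> t :: real
  assumes "n \<ge> 2" and "t < 1"
  shows "(1 - t) powr (real n + \<alpha>) * (1 + t) powi (int n + (-2))
     = (\<Sum>k\<le>n-2. real (n-2 choose k) * 2 ^ (n-2-k) * (-1) ^ k * (1 - t) powr (real n + \<alpha> + real k))"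
proof -
  have "int n + (-2) = int (n - 2)"
    using assms(1) by simp
  then have "(1 + t) powi (int n + (-2)) = (- (1 - t) + 2) ^ (n - 2)"
    by (simp only: power_int_of_nat) simp
  also have "\<dots> = (\<Sum>k\<le>n-2. real (n-2 choose k) * (- (1 - t)) ^ k * 2 ^ (n-2-k))"
    by (rule binomial_ring)
  finally have expand: "(1 + t) powi (int n + (-2))
      = (\<Sum>k\<le>n-2. real (n-2 choose k) * (- (1 - t)) ^ k * 2 ^ (n-2-k))" .
  have "(1 - t) powr (real n + \<alpha>) * (real (n-2 choose k) * (- (1 - t)) ^ k * 2 ^ (n-2-k))
      = real (n-2 choose k) * 2 ^ (n-2-k) * (-1) ^ k * (1 - t) powr (real n + \<alpha> + real k)" for k
  proof -
    have "(- (1 - t)) ^ k = (-1) ^ k * (1 - t) powr (real k)"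
      using assms(2) by (subst power_minus) (simp add: powr_realpow)
    then show ?thesis
      by (simp add: powr_add ac_simps)
  qed
  then show ?thesis
    unfolding expand sum_distrib_left by (rule sum.cong[OF refl])
qed

lemma jacobiP_beta_minus2:
  fixes n :: nat and \<alpha> y :: real
  assumes "n \<ge> 2" and "y < 1"
  shows "jacobiP n \<alpha> (-2) y = (1 + y) ^ 2 / (2 ^ n * fact n) *
     (\<Sum>k\<le>n-2. real (n-2 choose k) * 2 ^ (n-2-k) * (-1) ^ k * pochhammer (\<alpha> + real k + 1) n * (1 - y) ^ k)"
proof -
  define e where "e k = real n + \<alpha> + real k" for k
  define b where "b k = real (n-2 choose k) * 2 ^ (n-2-k) * (-1) ^ k" for k :: nat
  define g where "g j t = (\<Sum>k\<le>n-2. b k * (pochhammer (- e k) j * (1 - t) powr (e k - real j)))" for j t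
  have D: "(deriv ^^ n) (\<lambda>t. (1 - t) powr (real n + \<alpha>) * (1 + t) powi (int n + (-2))) y = g n y"
  proof (rule funpow_deriv_eq_on_open[of "{..<1}"])
    show "(1 - t) powr (real n + \<alpha>) * (1 + t) powi (int n + (-2)) = g 0 t" if "t \<in> {..<1}" for t
      using rodrigues_term_beta_minus2_eq_sum[OF assms(1), of t \<alpha>] that
      by (simp add: g_def b_def e_def)
    show "(g j has_real_derivative g (Suc j) t) (at t)" if "t \<in> {..<1}" for j t
      unfolding g_def using that
      by (intro DERIV_sum DERIV_cmult has_real_derivative_pochhammer_one_minus_powr) simp
  qed (use assms(2) in auto)
  have "jacobiP n \<alpha> (-2) y = (1 + y) ^ 2 / (2 ^ n * fact n) * ((-1) ^ n * (1 - y) powr (- \<alpha>) * g n y)"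
    unfolding jacobiP_def D by simp
  also have "(-1) ^ n * (1 - y) powr (- \<alpha>) * g n y
      = (\<Sum>k\<le>n-2. b k * pochhammer (\<alpha> + real k + 1) n * (1 - y) ^ k)"
    unfolding g_def sum_distrib_left
  proof (rule sum.cong[OF refl])
    fix k
    have powr_eq: "(1 - y) powr (- \<alpha>) * (1 - y) powr (e k - real n) = (1 - y) ^ k"
      using assms(2) by (simp add: e_def powr_add[symmetric] powr_realpow)
    have "e k - real n + 1 = \<alpha> + real k + 1"
      by (simp add: e_def)
    then have poch_eq: "pochhammer (- e k) n = (-1) ^ n * pochhammer (\<alpha> + real k + 1) n"
      by (simp only: pochhammer_minus)
    have sign: "(-1 :: real) ^ n * (-1) ^ n = 1"
      by (simp flip: power_mult_distrib)
    have "(-1) ^ n * (1 - y) powr (- \<alpha>) * (b k * (pochhammer (- e k) n * (1 - y) powr (e k - real n)))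
        = ((-1) ^ n * (-1) ^ n) * b k * pochhammer (\<alpha> + real k + 1) n
          * ((1 - y) powr (- \<alpha>) * (1 - y) powr (e k - real n))"
      unfolding poch_eq by (simp only: ac_simps)
    then show "(-1) ^ n * (1 - y) powr (- \<alpha>) * (b k * (pochhammer (- e k) n * (1 - y) powr (e k - real n)))
        = b k * pochhammer (\<alpha> + real k + 1) n * (1 - y) ^ k"
      unfolding sign powr_eq by simp
  qed
  finally show ?thesis
    by (simp add: b_def)
qed

section \<open>The function \<open>G\<^sup>B\<close> as a polynomial\<close>

definition GB_coeff :: "nat \<Rightarrow> real \<Rightarrow> nat \<Rightarrow> real" where
  "GB_coeff m \<alpha> i = (-1) ^ i * real (m - 1 choose i) * pochhammer (\<alpha> + real i + 1) (m + 1)"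

definition GB_const :: "nat \<Rightarrow> real \<Rightarrow> real" where
  "GB_const m \<alpha> = Gamma (\<alpha> + real m) / (pi powr \<alpha> * Gamma (real m)) / fact (m + 1)"

definition GB_poly :: "nat \<Rightarrow> real \<Rightarrow> real poly" where
  "GB_poly m \<alpha> = smult (GB_const m \<alpha>) ([:1, 0, -1:] ^ 2 * (\<Sum>i<m. monom (GB_coeff m \<alpha> i) (2 * i)))"

lemma poly_GB_poly:
  "poly (GB_poly m \<alpha>) x = GB_const m \<alpha> * ((1 - x\<^sup>2)\<^sup>2 * (\<Sum>i<m. GB_coeff m \<alpha> i * x ^ (2 * i)))"
proof -
  have "poly [:1, 0, -1:] x = 1 - x\<^sup>2"
    by (simp add: power2_eq_square)
  then show ?thesis
    by (simp add: GB_poly_def poly_sum poly_monom)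
qed

lemma jacobiP_one_minus_two_square:
  fixes x \<alpha> :: real
  assumes "m \<ge> 1" and "x \<noteq> 0"
  shows "jacobiP (Suc m) \<alpha> (-2) (1 - 2 * x\<^sup>2)
       = (1 - x\<^sup>2)\<^sup>2 / fact (Suc m) * (\<Sum>i<m. GB_coeff m \<alpha> i * x ^ (2 * i))"
proof -
  define y where "y = 1 - 2 * x\<^sup>2"
  define c where "c i = real (m - 1 choose i) * (-1) ^ i * pochhammer (\<alpha> + real i + 1) (Suc m)" for i
  have "y < 1"
    using assms(2) by (simp add: y_def)
  have "{..Suc m - 2} = {..<m}"
    using assms(1) by auto
  then have "jacobiP (Suc m) \<alpha> (-2) y
      = (1 + y) ^ 2 / (2 ^ Suc m * fact (Suc m)) * (\<Sum>i<m. c i * (2 ^ (m - 1 - i) * (1 - y) ^ i))"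
    using jacobiP_beta_minus2[of "Suc m" y \<alpha>] assms(1) \<open>y < 1\<close> by (simp add: c_def ac_simps)
  also have "(\<Sum>i<m. c i * (2 ^ (m - 1 - i) * (1 - y) ^ i)) = 2 ^ (m - 1) * (\<Sum>i<m. GB_coeff m \<alpha> i * x ^ (2 * i))"
    unfolding sum_distrib_left
  proof (rule sum.cong[OF refl])
    fix i assume "i \<in> {..<m}"
    then have "(2::real) ^ (m - 1 - i) * 2 ^ i = 2 ^ (m - 1)"
      by (simp flip: power_add)
    moreover have "(1 - y) ^ i = 2 ^ i * x ^ (2 * i)"
      by (simp add: y_def power_mult_distrib power_mult)
    ultimately show "c i * (2 ^ (m - 1 - i) * (1 - y) ^ i) = 2 ^ (m - 1) * (GB_coeff m \<alpha> i * x ^ (2 * i))"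
      unfolding GB_coeff_def c_def by (simp add: algebra_simps)
  qed
  also have "(1 + y) ^ 2 / (2 ^ Suc m * fact (Suc m)) * (2 ^ (m - 1) * (\<Sum>i<m. GB_coeff m \<alpha> i * x ^ (2 * i)))
      = (1 - x\<^sup>2)\<^sup>2 / fact (Suc m) * (\<Sum>i<m. GB_coeff m \<alpha> i * x ^ (2 * i))"
  proof -
    have "(1 + y) ^ 2 = 4 * (1 - x\<^sup>2)\<^sup>2"
      by (simp add: y_def power2_eq_square algebra_simps)
    moreover have "(2::real) ^ Suc m = 4 * 2 ^ (m - 1)"
      using assms(1) by (cases m) simp_all
    ultimately show ?thesis
      by simp
  qed
  finally show ?thesis
    by (simp add: y_def)
qed

lemma GB_eq_poly_GB_poly:
  assumes "q = 2 * m" "m \<ge> 1" "0 < x" "x \<le> 1"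
  shows "GB d q x = poly (GB_poly m (real d / 2)) x"
proof -
  have params: "(real d + real q) / 2 = real d / 2 + real m" "real q / 2 = real m" "q div 2 + 1 = Suc m"
    using assms(1) by (simp_all add: field_simps)
  show ?thesis
    unfolding GB_def params poly_GB_poly GB_const_def using assms(2-4)
    by (simp add: jacobiP_one_minus_two_square)
qed

lemma odd_coeff_eq_0_if_poly_even:
  fixes p :: "real poly"
  assumes "\<And>x. poly p (- x) = poly p x" and "odd k"
  shows "coeff p k = 0"
proof -
  have "pcompose p [:0, -1:] = p"
    using assms(1) by (simp add: poly_eq_poly_eq_iff[symmetric] poly_pcompose fun_eq_iff)
  then have "(-1) ^ k * coeff p k = coeff p k"
    by (metis coeff_pcompose_linear)
  with assms(2) show ?thesis
    by simp
qed

lemma odd_poly_deg_le_pderiv: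
  fixes p :: "real poly"
  assumes "\<And>x. poly p (- x) = poly p x" and "degree p \<le> Suc n"
  shows "odd_poly_deg_le n (pderiv p)"
  unfolding odd_poly_deg_le_def
proof (intro allI impI)
  fix k assume "coeff (pderiv p) k \<noteq> 0"
  then have "coeff p (Suc k) \<noteq> 0"
    by (simp add: coeff_pderiv)
  then show "odd k \<and> k \<le> n"
    using odd_coeff_eq_0_if_poly_even[OF assms(1), of "Suc k"] assms(2) le_degree by fastforce
qed

lemma degree_GB_poly:
  assumes "m \<ge> 1"
  shows "degree (GB_poly m \<alpha>) \<le> 2 * m + 2"
proof -
  define S where "S = (\<Sum>i<m. monom (GB_coeff m \<alpha> i) (2 * i))"
  have "degree (GB_poly m \<alpha>) \<le> degree ([:1, 0, -1:] ^ 2 * S)"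
    unfolding GB_poly_def S_def by (rule degree_smult_le)
  also have "\<dots> \<le> degree ([:1, 0, -1:] ^ 2 :: real poly) + degree S"
    by (rule degree_mult_le)
  also have "\<dots> \<le> 4 + (2 * m - 2)"
  proof (rule add_mono)
    show "degree ([:1, 0, -1:] ^ 2 :: real poly) \<le> 4"
      using degree_power_le[of "[:1, 0, -1:] :: real poly" 2] by simp
    show "degree S \<le> 2 * m - 2"
      unfolding S_def by (intro degree_sum_le) (auto intro: order.trans[OF degree_monom_le])
  qed
  finally show ?thesis
    using assms by simp
qed

lemma odd_poly_deg_le_pderiv_GB_poly:
  assumes "m \<ge> 1"
  shows "odd_poly_deg_le (2 * m + 1) (pderiv (GB_poly m \<alpha>))"
  using degree_GB_poly[OF assms] by (intro odd_poly_deg_le_pderiv) (simp_all add: poly_GB_poly)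

lemma GB_poly_double_root_1:
  "poly (GB_poly m \<alpha>) 1 = 0" "poly (pderiv (GB_poly m \<alpha>)) 1 = 0"
proof -
  define P :: "real poly" where "P = [:1, 0, -1:]"
  have "poly P 1 = 0"
    by (simp add: P_def)
  then show "poly (GB_poly m \<alpha>) 1 = 0" "poly (pderiv (GB_poly m \<alpha>)) 1 = 0"
    unfolding GB_poly_def P_def[symmetric] by (simp_all add: pderiv_smult pderiv_mult power2_eq_square)
qed

lemma has_real_derivative_pbar:
  assumes "poly p 1 = 0" and "poly (pderiv p) 1 = 0"
  shows "(pbar p has_real_derivative pbar (pderiv p) x) (at x)"
proof -
  have closures: "closure {..1::real} = {..1}" "closure {1::real<..} = {1..}"
    by simp_all
  have "((\<lambda>x. if x \<in> {..1} then poly p x else 0) has_vector_derivative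
      (if x \<in> {..1} then poly (pderiv p) x else 0)) (at x within {..1} \<union> {1<..})"
    by (rule has_vector_derivative_If_within_closures[where T = "{1<..}"])
       (use assms in \<open>auto simp: closures has_real_derivative_iff_has_vector_derivative[symmetric]
          intro: has_field_derivative_at_within\<close>)
  moreover have "{..1} \<union> {1<..} = (UNIV :: real set)"
    by auto
  moreover have "pbar p = (\<lambda>x. if x \<in> {..1} then poly p x else 0)"
    "pbar (pderiv p) x = (if x \<in> {..1} then poly (pderiv p) x else 0)"
    by (auto simp: pbar_def)
  ultimately show ?thesis
    unfolding has_real_derivative_iff_has_vector_derivative by (simp only:)
qed

lemma GB_has_real_derivative:
  assumes "q = 2 * m" "m \<ge> 1" "x > 0"
  shows "(GB d q has_real_derivative pbar (pderiv (GB_poly m (real d / 2))) x) (at x)"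
proof (rule has_field_derivative_transform_within_open)
  show "(pbar (GB_poly m (real d / 2)) has_real_derivative pbar (pderiv (GB_poly m (real d / 2))) x) (at x)"
    by (intro has_real_derivative_pbar GB_poly_double_root_1)
  show "pbar (GB_poly m (real d / 2)) y = GB d q y" if "y \<in> {0<..}" for y
    using that GB_eq_poly_GB_poly[OF assms(1,2)] by (auto simp: pbar_def GB_def)
qed (use assms(3) in auto)

section \<open>Moments of the derivative of \<open>G\<^sup>B\<close>\<close>

lemma has_integral_moment_pderiv:
  fixes p :: "real poly"
  assumes "poly p 1 = 0" and "r \<ge> 1"
    and "((\<lambda>x. x ^ (r - 1) * poly p x) has_integral I) {0..1}"
  shows "((\<lambda>x. x ^ r * poly (pderiv p) x) has_integral - real r * I) {0..1}"
proof -
  have "((\<lambda>x. poly (pderiv p) x * x ^ r) has_integral - real r * I) {0..1}"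
  proof (rule integration_by_parts[OF bounded_bilinear_mult, where f = "poly p" and g = "\<lambda>x. x ^ r"])
    show "(poly p has_vector_derivative poly (pderiv p) x) (at x)" for x
      by (simp add: has_real_derivative_iff_has_vector_derivative[symmetric])
    show "((\<lambda>x. x ^ r) has_vector_derivative real r * x ^ (r - 1)) (at x)" for x
      using DERIV_pow[of r x] by (simp add: has_real_derivative_iff_has_vector_derivative)
    show "((\<lambda>x. poly p x * (real r * x ^ (r - 1))) has_integral
        poly p 1 * 1 ^ r - poly p 0 * 0 ^ r - - real r * I) {0..1}"
      using has_integral_mult_left[OF assms(3), of "real r"] assms(1,2)
      by (simp add: algebra_simps power_0_left)
  qed (auto intro: continuous_intros)
  then show ?thesis
    by (simp add: mult.commute)
qed

lemma has_integral_power_mult_one_minus_square: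
  "((\<lambda>x::real. x ^ n * (1 - x\<^sup>2)\<^sup>2) has_integral
      8 / ((real n + 1) * (real n + 3) * (real n + 5))) {0..1}"
proof -
  define a where "a = real n + 1"
  have "a > 0"
    by (simp add: a_def)
  have shifts: "real (n + 2) + 1 = a + 2" "real (n + 4) + 1 = a + 4" "real n + 3 = a + 2" "real n + 5 = a + 4"
    by (simp_all add: a_def)
  have expand: "x ^ n * (1 - x\<^sup>2)\<^sup>2 = x ^ n - 2 * x ^ (n + 2) + x ^ (n + 4)" for x :: real
    by (simp add: power2_eq_square power4_eq_xxxx power_add algebra_simps)
  have "((\<lambda>x::real. x ^ n * (1 - x\<^sup>2)\<^sup>2) has_integral 1 / a - 2 * (1 / (a + 2)) + 1 / (a + 4)) {0..1}"
    unfolding expand a_def shifts(1,2)[unfolded a_def, symmetric]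
    by (intro has_integral_add has_integral_diff has_integral_mult_right has_integral_power_unit_interval)
  moreover have "1 / a - 2 * (1 / (a + 2)) + 1 / (a + 4) = 8 / (a * (a + 2) * (a + 4))"
  proof -
    have "a + 2 > 0" "a + 4 > 0"
      using \<open>a > 0\<close> by linarith+
    with \<open>a > 0\<close> show ?thesis
      by (simp add: divide_simps) (simp add: algebra_simps)
  qed
  ultimately show ?thesis
    unfolding shifts(3,4) a_def[symmetric] by simp
qed

lemma pochhammer_3: "pochhammer (x :: real) 3 = x * (x + 1) * (x + 2)"
  by (simp add: numeral_3_eq_3 pochhammer_Suc)

definition GB_moment_sum :: "nat \<Rightarrow> real \<Rightarrow> nat \<Rightarrow> real" where
  "GB_moment_sum m \<alpha> k = (\<Sum>i<m. GB_coeff m \<alpha> i / pochhammer (\<alpha> + real k + real i) 3)"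

lemma has_integral_moment_pderiv_GB_poly:
  assumes "d \<ge> 1"
  shows "((\<lambda>x. x ^ (d + 2 * k) * poly (pderiv (GB_poly m (real d / 2))) x) has_integral
      - real (d + 2 * k) * (GB_const m (real d / 2) * GB_moment_sum m (real d / 2) k)) {0..1}"
proof (rule has_integral_moment_pderiv[OF GB_poly_double_root_1(1)])
  define \<alpha> where "\<alpha> = real d / 2"
  have term_integral: "((\<lambda>x. x ^ (d + 2 * k - 1 + 2 * i) * (1 - x\<^sup>2)\<^sup>2) has_integral
      1 / pochhammer (\<alpha> + real k + real i) 3) {0..1}" for i
  proof -
    define t where "t = \<alpha> + real k + real i"
    define n where "n = d + 2 * k - 1 + 2 * i"
    have shifts: "real n + 1 = 2 * t" "real n + 3 = 2 * (t + 1)" "real n + 5 = 2 * (t + 2)"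
      using assms by (simp_all add: n_def t_def \<alpha>_def of_nat_diff)
    have "(2 * t) * (2 * (t + 1)) * (2 * (t + 2)) = 8 * (t * (t + 1) * (t + 2))"
      by (simp add: algebra_simps)
    moreover have "8 / (8 * X) = 1 / X" for X :: real
      by simp
    ultimately have "((\<lambda>x. x ^ n * (1 - x\<^sup>2)\<^sup>2) has_integral 1 / (t * (t + 1) * (t + 2))) {0..1}"
      using has_integral_power_mult_one_minus_square[of n, unfolded shifts] by (simp only:)
    then show ?thesis
      unfolding pochhammer_3 n_def t_def .
  qed
  have expand: "x ^ (d + 2 * k - 1) * poly (GB_poly m \<alpha>) x
      = GB_const m \<alpha> * (\<Sum>i<m. GB_coeff m \<alpha> i * (x ^ (d + 2 * k - 1 + 2 * i) * (1 - x\<^sup>2)\<^sup>2))" for x :: real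
    by (simp add: poly_GB_poly sum_distrib_left power_add algebra_simps)
  have "((\<lambda>x. GB_const m \<alpha> * (\<Sum>i<m. GB_coeff m \<alpha> i * (x ^ (d + 2 * k - 1 + 2 * i) * (1 - x\<^sup>2)\<^sup>2)))
      has_integral GB_const m \<alpha> * (\<Sum>i<m. GB_coeff m \<alpha> i * (1 / pochhammer (\<alpha> + real k + real i) 3))) {0..1}"
    by (intro has_integral_mult_right has_integral_sum finite_lessThan term_integral)
  then show "((\<lambda>x. x ^ (d + 2 * k - 1) * poly (GB_poly m (real d / 2)) x) has_integral
      GB_const m (real d / 2) * GB_moment_sum m (real d / 2) k) {0..1}"
    unfolding \<alpha>_def[symmetric] GB_moment_sum_def expand by (simp only: times_divide_eq_right mult_1_right)
qed (use assms in simp)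

lemma GB_moment_sum_eq_0:
  assumes "\<alpha> > 0" and "1 \<le> k" and "k \<le> m - 1"
  shows "GB_moment_sum m \<alpha> k = 0"
proof -
  define Q where "Q = pochhammer_poly (\<alpha> + 1) (k - 1) * pochhammer_poly (\<alpha> + real k + 3) (m - 1 - k)"
  have "degree Q \<le> (k - 1) + (m - 1 - k)"
    unfolding Q_def using degree_mult_le by (metis degree_pochhammer_poly)
  then have "degree Q < m - 1"
    using assms(2,3) by linarith
  have summand: "GB_coeff m \<alpha> i / pochhammer (\<alpha> + real k + real i) 3
      = (-1) ^ i * real (m - 1 choose i) * poly Q (real i)" for i
  proof -
    define a where "a = \<alpha> + real i"
    have "m + 1 = (k - 1) + (3 + (m - 1 - k))" "a + 1 + real (k - 1) = a + real k"
      using assms(2,3) by (simp_all add: of_nat_diff)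
    then have "pochhammer (a + 1) (m + 1)
        = pochhammer (a + 1) (k - 1) * pochhammer (a + real k) 3 * pochhammer (a + real k + 3) (m - 1 - k)"
      by (simp only: pochhammer_product' add.assoc[symmetric] mult.assoc) (simp add: add_ac)
    moreover have "pochhammer (a + real k) 3 \<noteq> 0"
      using assms(1) pochhammer_pos[of "a + real k" 3] by (simp add: a_def add_pos_nonneg)
    ultimately show ?thesis
      by (simp add: GB_coeff_def Q_def poly_pochhammer_poly a_def add_ac)
  qed
  have "{..<m} = {..m - 1}"
    using assms(2,3) by auto
  then show ?thesis
    unfolding GB_moment_sum_def summand
    using alternating_binomial_sum_poly_eq_0[OF \<open>degree Q < m - 1\<close>] by simp
qed

lemma GB_moment_sum_0:
  assumes "\<alpha> > 0" and "m \<ge> 1"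
  shows "GB_moment_sum m \<alpha> 0 = fact (m + 1) / 2 * (fact (m - 1) / pochhammer \<alpha> m)"
proof -
  define P where "P = pochhammer_poly 3 (m - 1)"
  have summand: "GB_coeff m \<alpha> i / pochhammer (\<alpha> + real 0 + real i) 3
      = (-1) ^ i * real (m - 1 choose i) * (poly P (\<alpha> + real i) / (\<alpha> + real i))" for i
  proof -
    define a where "a = \<alpha> + real i"
    have "m + 1 = 2 + (m - 1)" "Suc 2 = 3"
      using assms(2) by simp_all
    then have "pochhammer (a + 1) (m + 1) = pochhammer (a + 1) 2 * pochhammer (a + 3) (m - 1)"
      and "pochhammer a 3 = a * pochhammer (a + 1) 2"
      using pochhammer_rec[of a 2] by (simp_all only: pochhammer_product') (simp add: add_ac)
    moreover have "a \<noteq> 0" "pochhammer (a + 1) 2 \<noteq> 0"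
      using assms(1) pochhammer_pos[of "a + 1" 2] by (simp_all add: a_def add_pos_nonneg)
    ultimately show ?thesis
      by (simp add: GB_coeff_def P_def poly_pochhammer_poly a_def add_ac)
  qed
  have "poly P 0 = fact (m + 1) / 2"
  proof -
    have "fact (m + 1) = pochhammer (1 :: real) (2 + (m - 1))"
      using assms(2) by (simp add: pochhammer_fact)
    also have "\<dots> = 2 * pochhammer 3 (m - 1)"
      by (simp only: pochhammer_product') (simp add: pochhammer_Suc numeral_2_eq_2)
    finally show ?thesis
      by (simp add: P_def poly_pochhammer_poly)
  qed
  moreover have "{..<m} = {..m - 1}" "Suc (m - 1) = m"
    using assms(2) by auto
  moreover have "GB_moment_sum m \<alpha> 0 = poly P 0 * (fact (m - 1) / pochhammer \<alpha> (Suc (m - 1)))"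
    unfolding GB_moment_sum_def summand \<open>{..<m} = {..m - 1}\<close>
    by (rule alternating_binomial_sum_poly_div[OF assms(1)]) (simp add: P_def degree_pochhammer_poly)
  ultimately show ?thesis
    by (simp only:)
qed

lemma poly_moment_pderiv_GB_poly:
  assumes "d \<ge> 1"
  shows "poly_moment (d + 2 * k) (pderiv (GB_poly m (real d / 2)))
       = - real (d + 2 * k) * (GB_const m (real d / 2) * GB_moment_sum m (real d / 2) k)"
  unfolding poly_moment_def by (rule integral_unique[OF has_integral_moment_pderiv_GB_poly[OF assms]])

lemma GB_const_mult_GB_moment_sum_0:
  assumes "\<alpha> > 0" and "m \<ge> 1"
  shows "GB_const m \<alpha> * GB_moment_sum m \<alpha> 0 = Gamma \<alpha> / (2 * pi powr \<alpha>)"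
proof -
  have "\<alpha> \<notin> \<int>\<^sub>\<le>\<^sub>0"
    using assms(1) nonpos_Ints_nonpos by fastforce
  then have poch: "pochhammer \<alpha> m = Gamma (\<alpha> + real m) / Gamma \<alpha>"
    by (simp add: pochhammer_Gamma)
  have Gamma_m: "Gamma (real m) = fact (m - 1)"
    using assms(2) Gamma_fact[of "m - 1"] by (simp add: of_nat_diff)
  have cancel: "G / (P * F2) / F1 * (F1 / 2 * (F2 / (G / Ga))) = Ga / (2 * P)"
    if "G > 0" "Ga > 0" "P > 0" "F1 > 0" "F2 > 0" for G Ga P F1 F2 :: real
    using that by (simp add: field_simps)
  show ?thesis
    unfolding GB_moment_sum_0[OF assms] GB_const_def poch Gamma_m
    by (rule cancel) (use assms in \<open>simp_all add: add_pos_nonneg\<close>)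
qed

lemma poly_moment_pderiv_GB_poly_normalization:
  assumes "d \<ge> 1" and "m \<ge> 1"
  shows "poly_moment d (pderiv (GB_poly m (real d / 2))) = - real d / bsph d"
  using poly_moment_pderiv_GB_poly[OF assms(1), of 0 m]
    GB_const_mult_GB_moment_sum_0[of "real d / 2" m] assms
  by (simp add: bsph_def)

lemma poly_moment_pderiv_GB_poly_eq_0:
  assumes "d \<ge> 1" and "1 \<le> k" and "k \<le> m - 1"
  shows "poly_moment (d + 2 * k) (pderiv (GB_poly m (real d / 2))) = 0"
  using poly_moment_pderiv_GB_poly[OF assms(1), of k m] GB_moment_sum_eq_0[of "real d / 2" k m] assms
  by simp

lemma ball_odd_atLeastAtMost_iff:
  fixes m :: nat
  shows "(\<forall>i\<in>{3..2 * m - 1}. odd i \<longrightarrow> P i) \<longleftrightarrow> (\<forall>k\<in>{1..m - 1}. P (2 * k + 1))"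
proof
  assume "\<forall>i\<in>{3..2 * m - 1}. odd i \<longrightarrow> P i"
  then show "\<forall>k\<in>{1..m - 1}. P (2 * k + 1)"
    by auto
next
  assume odd_P: "\<forall>k\<in>{1..m - 1}. P (2 * k + 1)"
  show "\<forall>i\<in>{3..2 * m - 1}. odd i \<longrightarrow> P i"
  proof (intro ballI impI)
    fix i assume "i \<in> {3..2 * m - 1}" "odd i"
    then have "i = 2 * (i div 2) + 1" "i div 2 \<in> {1..m - 1}"
      by auto
    then show "P i"
      using odd_P by metis
  qed
qed

section \<open>The class \<open>M\<close>\<close>

lemma bsph_pos: "d \<ge> 1 \<Longrightarrow> bsph d > 0"
  by (simp add: bsph_def)

lemma M_class_pbar_iff:
  assumes "d \<ge> 1"
  shows "M_class d (2 * m) (pbar p) \<longleftrightarrow>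
    poly_moment d p = - real d / bsph d \<and>
    (\<forall>k\<in>{1..m - 1}. poly_moment (d + 2 * k) p = 0) \<and>
    poly_moment (d + 2 * m) p \<noteq> 0"
proof -
  have "d - 1 + (2 * k + 1) = d + 2 * k" for k
    using assms by simp
  then show ?thesis
    unfolding M_class_def Bmom_pbar ball_odd_atLeastAtMost_iff
    using has_integral_pbar_moment by (auto simp: has_integral_integrable)
qed

lemma M_class_imp_integral_ne_0:
  assumes "d \<ge> 1" and "M_class d q g"
  shows "integral {0..} (\<lambda>x. x ^ (d + q) * g x) \<noteq> 0"
proof -
  have "d - 1 + (q + 1) = d + q"
    using assms(1) by simp
  with assms(2) show ?thesis
    by (simp add: M_class_def Bmom_def)
qed

lemma M_class_pderiv_GB_poly:
  assumes "d \<ge> 1" and "m \<ge> 1"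
  shows "M_class d (2 * m) (pbar (pderiv (GB_poly m (real d / 2))))"
proof -
  define p where "p = pderiv (GB_poly m (real d / 2))"
  have first: "poly_moment d p = - real d / bsph d"
    unfolding p_def using assms by (rule poly_moment_pderiv_GB_poly_normalization)
  have middle: "\<forall>k\<in>{1..m - 1}. poly_moment (d + 2 * k) p = 0"
    unfolding p_def using assms(1) poly_moment_pderiv_GB_poly_eq_0 by auto
  have "poly_moment (d + 2 * m) p \<noteq> 0"
  proof
    assume top: "poly_moment (d + 2 * m) p = 0"
    have "p = 0"
    proof (rule odd_poly_eq_0_if_moments_vanish[where R = "(\<lambda>k. d + 2 * k) ` {1..m}"])
      show "odd_poly_deg_le (2 * m + 1) p"
        unfolding p_def using assms(2) by (rule odd_poly_deg_le_pderiv_GB_poly)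
      show "poly p 1 = 0"
        unfolding p_def by (rule GB_poly_double_root_1)
      show "finite ((\<lambda>k. d + 2 * k) ` {1..m})" "card ((\<lambda>k. d + 2 * k) ` {1..m}) = m"
        by (simp_all add: card_image inj_on_def)
      show "poly_moment r p = 0" if "r \<in> (\<lambda>k. d + 2 * k) ` {1..m}" for r
        using that top middle by (cases "r = d + 2 * m") auto
    qed
    then have "poly_moment d p = 0"
      by (simp add: poly_moment_def)
    with first bsph_pos[OF assms(1)] assms(1) show False
      by simp
  qed
  with first middle show ?thesis
    unfolding p_def M_class_pbar_iff[OF assms(1)] by blast
qed

lemma M_class_odd_poly_unique:
  assumes "d \<ge> 1"
    and p: "odd_poly_deg_le (2 * m + 1) p" "M_class d (2 * m) (pbar p)" "poly p 1 = 0"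
    and p': "odd_poly_deg_le (2 * m + 1) p'" "M_class d (2 * m) (pbar p')" "poly p' 1 = 0"
  shows "p = p'"
proof -
  have "p - p' = 0"
  proof (rule odd_poly_eq_0_if_moments_vanish[where R = "(\<lambda>k. d + 2 * k) ` {..<m}"])
    show "odd_poly_deg_le (2 * m + 1) (p - p')"
      using p(1) p'(1) by (rule odd_poly_deg_le_diff)
    show "poly (p - p') 1 = 0"
      using p(3) p'(3) by simp
    show "finite ((\<lambda>k. d + 2 * k) ` {..<m})" "card ((\<lambda>k. d + 2 * k) ` {..<m}) = m"
      by (simp_all add: card_image inj_on_def)
    show "poly_moment r (p - p') = 0" if r: "r \<in> (\<lambda>k. d + 2 * k) ` {..<m}" for r
    proof -
      obtain k where "k < m" "r = d + 2 * k"
        using r by blast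
      then show ?thesis
        using p(2) p'(2) unfolding poly_moment_diff M_class_pbar_iff[OF assms(1)]
        by (cases "k = 0") auto
    qed
  qed
  then show ?thesis
    by simp
qed

theorem lemmaB13:
  fixes d q :: nat
  assumes "d \<ge> 1" and "q \<ge> 2" and "even q"
  shows "(\<exists>!(C, p). C \<noteq> (0::real) \<and>
              (\<forall>k. coeff p k \<noteq> 0 \<longrightarrow> odd k \<and> k \<le> q + 1) \<and>
              M_class d q (pbar p) \<and>
              integral {0..} (\<lambda>x. x ^ (d + q) * pbar p x) = C \<and>
              poly p 1 = 0)
       \<and> (\<forall>C p. C \<noteq> (0::real) \<and>
              (\<forall>k. coeff p k \<noteq> 0 \<longrightarrow> odd k \<and> k \<le> q + 1) \<and>
              M_class d q (pbar p) \<and>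
              integral {0..} (\<lambda>x. x ^ (d + q) * pbar p x) = C \<and>
              poly p 1 = 0
            \<longrightarrow> (\<forall>x>0. (GB d q has_real_derivative pbar p x) (at x)))"
proof -
  obtain m where q: "q = 2 * m" and "m \<ge> 1"
    using assms(2,3) by (auto elim!: evenE)
  define p0 where "p0 = pderiv (GB_poly m (real d / 2))"
  define C0 where "C0 = integral {0..} (\<lambda>x. x ^ (d + q) * pbar p0 x)"
  have p0: "odd_poly_deg_le (q + 1) p0" "M_class d q (pbar p0)" "poly p0 1 = 0"
    unfolding p0_def q
    using odd_poly_deg_le_pderiv_GB_poly[OF \<open>m \<ge> 1\<close>] M_class_pderiv_GB_poly[OF assms(1) \<open>m \<ge> 1\<close>]
      GB_poly_double_root_1 by blast+
  have unique: "p = p0" if "odd_poly_deg_le (q + 1) p" "M_class d q (pbar p)" "poly p 1 = 0" for p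
    using M_class_odd_poly_unique[OF assms(1)] that p0 unfolding q by simp
  have "C0 \<noteq> 0"
    unfolding C0_def using assms(1) p0(2) by (rule M_class_imp_integral_ne_0)
  then have solution_iff: "C \<noteq> 0 \<and> odd_poly_deg_le (q + 1) p \<and> M_class d q (pbar p) \<and>
      integral {0..} (\<lambda>x. x ^ (d + q) * pbar p x) = C \<and> poly p 1 = 0 \<longleftrightarrow> (C, p) = (C0, p0)" for C p
    using p0 unique[of p] unfolding C0_def by auto
  show ?thesis
    unfolding odd_poly_deg_le_def[symmetric] solution_iff
    using GB_has_real_derivative[OF q \<open>m \<ge> 1\<close>] by (auto simp: p0_def)
qed

end
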